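(* Let $T\ge 2$ be an integer, $v>0$, $\theta\in(0,1)$, $\beta\in(0,1]$, and suppose $\theta\ge\beta>\theta^T$. Let $\nu:=\lfloor \log\beta/\log\theta\rfloor$. Consider the stopping problem on times $\{0,1,\dots,T\}$ in which, from the perspective of time $t$, stopping at time $t+j$ ($0\le j\le T-t$) has value $\theta^{T-t}v$ if $j=0$ and $\beta\theta^{T-t-j}v$ if $j\ge1$. A (pure) strategy is a map $\sigma:\{0,\dots,T\}\to\{0,1\}$ with $\sigma(T)=1$ ($1$ = stop, $0$ = continue); for $t<T$ let $\tau_\sigma(t)=\min\{s>t:\sigma(s)=1\}$. Define: - the naive strategy $\sigma_0$: $\sigma_0(T)=1$ and for $t<T$, $\sigma_0(t)=1$ iff $\theta^{T-t}v\ge\max_{1\le j\le T-t}\beta\theta^{T-t-j}v$; - the update $\sigma\mapsto\sigma'$: $\sigma'(T)=1$ and for $t<T$, $\sigma'(t)=1$ iff $\theta^{T-t}v\ge\beta\theta^{T-\tau_\sigma(t)}v$; set $\sigma_{n+1}=\sigma_n'$ for $n\ge 0$; - the sophisticated strategy $\sigma_S$: $\sigma_S(T)=1$ and, backward for $t=T-1,\dots,0$, $\sigma_S(t)=1$ iff $\theta^{T-t}v\ge\beta\theta^{T-\tau_{\sigma_S}(t)}v$. Then $\nu\in\{1,2,\dots,T-1\}$, and $\sigma_n=\sigma_S$ for $n=\lceil T/\nu\rceil$; that is, the naive strategy is turned into the sophisticated one after $\lceil T/\nu\rceil$ rounds of training.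
   Context: This is the present-biased optimal stopping problem with immediate reward: stopping at absolute time $s$ yields reward $\theta^{T-s}v$ (so waiting increases the reward by a factor $1/\theta$ per period), and any reward not received immediately is additionally discounted by the present-bias factor $\beta$. The problem is state-independent, so strategies depend only on time. Ties are broken in favour of stopping. In each training round the agent at time $t$ chooses whether to stop now, taking as given that from time $t+1$ on she follows the previous round's strategy. *)

theory Defs
  imports Complex_Main
begin

text \<open>Strategies are maps nat => bool (True = stop); only times 0..T matter,
  and all strategies below stop at every time t >= T.\<close>

definition stop_time :: "nat \<Rightarrow> (nat \<Rightarrow> bool) \<Rightarrow> nat \<Rightarrow> nat" where
  "stop_time T \<sigma> t = (LEAST s. t < s \<and> s \<le> T \<and> \<sigma> s)"

definition naive_strategy :: "nat \<Rightarrow> real \<Rightarrow> real \<Rightarrow> real \<Rightarrow> nat \<Rightarrow> bool" where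
  "naive_strategy T \<theta> \<beta> v t =
     (if T \<le> t then True
      else \<theta> ^ (T - t) * v \<ge> Max ((\<lambda>j. \<beta> * \<theta> ^ (T - t - j) * v) ` {1..T - t}))"

definition update_strategy ::
  "nat \<Rightarrow> real \<Rightarrow> real \<Rightarrow> real \<Rightarrow> (nat \<Rightarrow> bool) \<Rightarrow> nat \<Rightarrow> bool" where
  "update_strategy T \<theta> \<beta> v \<sigma> t =
     (if T \<le> t then True
      else \<theta> ^ (T - t) * v \<ge> \<beta> * \<theta> ^ (T - stop_time T \<sigma> t) * v)"

definition trained_strategy :: "nat \<Rightarrow> real \<Rightarrow> real \<Rightarrow> real \<Rightarrow> nat \<Rightarrow> nat \<Rightarrow> bool" where
  "trained_strategy T \<theta> \<beta> v n = (update_strategy T \<theta> \<beta> v ^^ n) (naive_strategy T \<theta> \<beta> v)"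

text \<open>Backward induction: stage k has decided times T-k..T (and all later times = stop).\<close>
primrec soph_stage :: "nat \<Rightarrow> real \<Rightarrow> real \<Rightarrow> real \<Rightarrow> nat \<Rightarrow> nat \<Rightarrow> bool" where
  "soph_stage T \<theta> \<beta> v 0 = (\<lambda>t. True)"
| "soph_stage T \<theta> \<beta> v (Suc k) =
     (let \<sigma> = soph_stage T \<theta> \<beta> v k; t = T - Suc k
      in \<sigma>(t := (\<theta> ^ (T - t) * v \<ge> \<beta> * \<theta> ^ (T - stop_time T \<sigma> t) * v)))"

definition soph_strategy :: "nat \<Rightarrow> real \<Rightarrow> real \<Rightarrow> real \<Rightarrow> nat \<Rightarrow> bool" where
  "soph_strategy T \<theta> \<beta> v = soph_stage T \<theta> \<beta> v T"

end

theory Submission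
  imports Defs
begin

text \<open>With \<open>\<nu>\<close> the largest \<open>k\<close> such that \<open>\<beta> \<le> \<theta>^k\<close>, waiting \<open>k \<ge> 1\<close> periods is worth it
  (from the current self's view) exactly when \<open>k > \<nu>\<close>. Hence the naive strategy stops in the
  last \<open>\<nu>\<close> periods, and each training round, facing a strategy that stops in the last \<open>m\<close>
  periods, stops in the last \<open>m + \<nu>\<close> periods. After \<open>\<lceil>T/\<nu>\<rceil>\<close> rounds the strategy stops
  everywhere, which is the sophisticated strategy because \<open>\<beta> \<le> \<theta>\<close> makes stopping now
  better than stopping next period.\<close>

definition patience :: "real \<Rightarrow> real \<Rightarrow> nat" where
  "patience \<theta> \<beta> = nat \<lfloor>ln \<beta> / ln \<theta>\<rfloor>"

definition horizon_strategy :: "nat \<Rightarrow> nat \<Rightarrow> nat \<Rightarrow> bool" where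
  "horizon_strategy T m t \<longleftrightarrow> T \<le> t + m"

lemma le_power_iff_le_floor_ln_div:
  fixes \<theta> \<beta> :: real
  assumes "0 < \<theta>" "\<theta> < 1" "0 < \<beta>"
  shows "\<beta> \<le> \<theta> ^ k \<longleftrightarrow> int k \<le> \<lfloor>ln \<beta> / ln \<theta>\<rfloor>"
proof -
  have "ln \<theta> < 0" using assms by simp
  have "\<beta> \<le> \<theta> ^ k \<longleftrightarrow> ln \<beta> \<le> ln (\<theta> ^ k)"
    using assms by simp
  also have "\<dots> \<longleftrightarrow> ln \<beta> \<le> real k * ln \<theta>"
    using assms by (simp add: ln_realpow)
  also have "\<dots> \<longleftrightarrow> real k \<le> ln \<beta> / ln \<theta>"
    using \<open>ln \<theta> < 0\<close> by (simp add: neg_le_divide_eq)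
  finally show ?thesis by (simp add: le_floor_iff)
qed

lemma le_power_iff_le_patience:
  assumes "0 < \<theta>" "\<theta> < 1" "0 < \<beta>" "\<beta> \<le> 1"
  shows "\<beta> \<le> \<theta> ^ k \<longleftrightarrow> k \<le> patience \<theta> \<beta>"
proof -
  have "0 \<le> \<lfloor>ln \<beta> / ln \<theta>\<rfloor>"
    using le_power_iff_le_floor_ln_div[OF assms(1-3), of 0] assms(4) by simp
  then show ?thesis
    unfolding patience_def le_power_iff_le_floor_ln_div[OF assms(1-3)] by (simp add: le_nat_iff)
qed

lemma delayed_reward_le_iff:
  fixes \<theta> \<beta> v :: real
  assumes "0 < \<theta>" "0 < v" "t < s" "s \<le> T"
  shows "\<beta> * \<theta> ^ (T - s) * v \<le> \<theta> ^ (T - t) * v \<longleftrightarrow> \<beta> \<le> \<theta> ^ (s - t)"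
proof -
  define p where "p = \<theta> ^ (T - s) * v"
  have "\<theta> ^ (T - t) = \<theta> ^ (s - t) * \<theta> ^ (T - s)"
    using assms by (simp add: power_add[symmetric])
  then have "\<theta> ^ (T - t) * v = \<theta> ^ (s - t) * p"
    by (simp add: p_def)
  moreover have "0 < p" using assms by (simp add: p_def)
  ultimately show ?thesis
    by (simp add: mult.assoc mult_le_cancel_right_pos flip: p_def)
qed

lemma stop_time_horizon_strategy:
  assumes "t < T" "1 \<le> m"
  shows "stop_time T (horizon_strategy T m) t = max (t + 1) (T - m)"
  unfolding stop_time_def horizon_strategy_def
  by (rule Least_equality) (use assms in auto)

lemma stop_time_always_stop:
  assumes "t < T"
  shows "stop_time T (\<lambda>_. True) t = t + 1"
  unfolding stop_time_def by (rule Least_equality) (use assms in auto)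

lemma naive_strategy_eq_horizon_strategy:
  fixes \<theta> \<beta> v :: real
  assumes "0 < \<theta>" "\<theta> < 1" "0 < \<beta>" "\<beta> \<le> 1" "0 < v"
  shows "naive_strategy T \<theta> \<beta> v = horizon_strategy T (patience \<theta> \<beta>)"
proof
  fix t
  show "naive_strategy T \<theta> \<beta> v t = horizon_strategy T (patience \<theta> \<beta>) t"
  proof (cases "T \<le> t")
    case True
    then show ?thesis by (simp add: naive_strategy_def horizon_strategy_def)
  next
    case False
    let ?R = "(\<lambda>j. \<beta> * \<theta> ^ (T - t - j) * v) ` {1..T - t}"
    have "Max ?R = \<beta> * v"
    proof (rule Max_eqI)
      show "\<beta> * v \<in> ?R"
        using False by (intro image_eqI[where x = "T - t"]) auto
    next
      fix y assume "y \<in> ?R"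
      then obtain j where "y = \<beta> * \<theta> ^ (T - t - j) * v" by auto
      moreover have "\<theta> ^ (T - t - j) \<le> 1" using assms by (simp add: power_le_one)
      ultimately show "y \<le> \<beta> * v" using assms by simp
    qed simp
    then show ?thesis
      using False assms le_power_iff_le_patience[OF assms(1-4), of "T - t"]
      by (auto simp: naive_strategy_def horizon_strategy_def)
  qed
qed

lemma update_horizon_strategy:
  fixes \<theta> \<beta> v :: real
  assumes "0 < \<theta>" "\<theta> < 1" "0 < \<beta>" "\<beta> \<le> 1" "0 < v"
    "1 \<le> patience \<theta> \<beta>" "1 \<le> m"
  shows "update_strategy T \<theta> \<beta> v (horizon_strategy T m)
           = horizon_strategy T (m + patience \<theta> \<beta>)"
proof
  fix t
  show "update_strategy T \<theta> \<beta> v (horizon_strategy T m) t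
          = horizon_strategy T (m + patience \<theta> \<beta>) t"
  proof (cases "T \<le> t")
    case True
    then show ?thesis by (simp add: update_strategy_def horizon_strategy_def)
  next
    case False
    define s where "s = max (t + 1) (T - m)"
    have "t < s" "s \<le> T" using False s_def by auto
    then have "update_strategy T \<theta> \<beta> v (horizon_strategy T m) t \<longleftrightarrow> s - t \<le> patience \<theta> \<beta>"
      using False stop_time_horizon_strategy[OF _ assms(7)] s_def
        delayed_reward_le_iff[OF assms(1,5)] le_power_iff_le_patience[OF assms(1-4)]
      by (simp add: update_strategy_def)
    also have "\<dots> \<longleftrightarrow> horizon_strategy T (m + patience \<theta> \<beta>) t"
      using False assms(6,7) by (auto simp: s_def horizon_strategy_def)
    finally show ?thesis .
  qed
qed

lemma trained_strategy_eq_horizon_strategy: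
  fixes \<theta> \<beta> v :: real
  assumes "0 < \<theta>" "\<theta> < 1" "0 < \<beta>" "\<beta> \<le> 1" "0 < v" "1 \<le> patience \<theta> \<beta>"
  shows "trained_strategy T \<theta> \<beta> v n = horizon_strategy T (Suc n * patience \<theta> \<beta>)"
proof (induction n)
  case 0
  then show ?case
    using naive_strategy_eq_horizon_strategy[OF assms(1-5)] by (simp add: trained_strategy_def)
next
  case (Suc n)
  have "trained_strategy T \<theta> \<beta> v (Suc n)
          = update_strategy T \<theta> \<beta> v (trained_strategy T \<theta> \<beta> v n)"
    by (simp add: trained_strategy_def)
  also have "\<dots> = horizon_strategy T (Suc n * patience \<theta> \<beta> + patience \<theta> \<beta>)"
    using Suc update_horizon_strategy[OF assms, of "Suc n * patience \<theta> \<beta>"] assms(6) by simp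
  finally show ?case by (simp add: add.commute)
qed

lemma soph_stage_always_stop:
  fixes \<theta> \<beta> v :: real
  assumes "0 < \<theta>" "0 < v" "\<beta> \<le> \<theta>" "k \<le> T"
  shows "soph_stage T \<theta> \<beta> v k = (\<lambda>_. True)"
  using assms(4)
proof (induction k)
  case (Suc k)
  then have "T - Suc k < T" by simp
  moreover have "\<beta> * \<theta> ^ (T - (T - Suc k + 1)) * v \<le> \<theta> ^ (T - (T - Suc k)) * v"
    using delayed_reward_le_iff[OF assms(1,2), of "T - Suc k" "T - Suc k + 1" T \<beta>] Suc.prems assms(3)
    by simp
  ultimately show ?case using Suc by (simp add: stop_time_always_stop Let_def)
qed simp

theorem proposition5p2:
  fixes T :: nat and v \<theta> \<beta> :: real
  assumes "T \<ge> 2" and "v > 0" and "0 < \<theta>" and "\<theta> < 1" and "0 < \<beta>" and "\<beta> \<le> 1"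
    and "\<theta> \<ge> \<beta>" and "\<beta> > \<theta> ^ T"
  shows "let \<nu> = \<lfloor>ln \<beta> / ln \<theta>\<rfloor> in
           1 \<le> \<nu> \<and> \<nu> \<le> int T - 1 \<and>
           (\<forall>t\<le>T. trained_strategy T \<theta> \<beta> v (nat \<lceil>real T / real_of_int \<nu>\<rceil>) t
                    = soph_strategy T \<theta> \<beta> v t)"
proof -
  define d where "d = patience \<theta> \<beta>"
  have floor_iff: "\<beta> \<le> \<theta> ^ k \<longleftrightarrow> int k \<le> \<lfloor>ln \<beta> / ln \<theta>\<rfloor>" for k
    using le_power_iff_le_floor_ln_div assms(3-5) .
  have \<nu>_bounds: "1 \<le> \<lfloor>ln \<beta> / ln \<theta>\<rfloor>" "\<lfloor>ln \<beta> / ln \<theta>\<rfloor> \<le> int T - 1"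
    using floor_iff[of 1] floor_iff[of T] assms(7,8) by auto
  have int_nat: "z = int (nat z) \<and> 1 \<le> nat z" if "1 \<le> z" for z :: int
    using that by simp
  have \<nu>: "\<lfloor>ln \<beta> / ln \<theta>\<rfloor> = int d" and "1 \<le> d"
    unfolding d_def patience_def using int_nat[OF \<nu>_bounds(1)] by blast+
  define n where "n = nat \<lceil>real T / real d\<rceil>"
  have "real T / real d \<le> real n"
    unfolding n_def by (rule real_nat_ceiling_ge)
  then have "real T \<le> real n * real d"
    using \<open>1 \<le> d\<close> by (simp add: divide_le_eq)
  then have "horizon_strategy T (Suc n * d) = (\<lambda>_. True)"
    by (auto simp: horizon_strategy_def simp flip: of_nat_mult)
  then show ?thesis
    using \<nu>_bounds \<open>1 \<le> d\<close>
      trained_strategy_eq_horizon_strategy[OF assms(3-6,2), of T n]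
      soph_stage_always_stop[OF assms(3,2,7) order.refl]
    unfolding Let_def \<nu> by (simp add: d_def n_def soph_strategy_def)
qed

end
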